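(* Every tropical halo has tempered growth.
   Context: A halo is a commutative unital semiring with a partial order compatible with its operations ($x\le z,y\le t\Rightarrow xy\le zt,\ x+y\le z+t$). It is tropical if it is not $\{0\}$, its order is total, and $a+b=\max(a,b)$. A halo $R$ has tempered growth if for every non-zero $P\in\mathbb{N}[X]$ and every $x\in R$, ($x^n\le P(n)$ in $R$ for all $n\in\mathbb{N}$) implies $x\le1$; here a natural number $m$ is interpreted in $R$ as $1+\dots+1$. *)

theory Defs
  imports "HOL-Computational_Algebra.Polynomial"
begin

definition halo :: "'a::{comm_semiring_1,order} itself \<Rightarrow> bool" where
  "halo _ \<longleftrightarrow>
     (\<forall>x y z t :: 'a. x \<le> z \<longrightarrow> y \<le> t \<longrightarrow> x * y \<le> z * t \<and> x + y \<le> z + t)"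

definition tropical_halo :: "'a::{comm_semiring_1,order} itself \<Rightarrow> bool" where
  "tropical_halo T \<longleftrightarrow> halo T \<and>
     (UNIV :: 'a set) \<noteq> {0} \<and>
     (\<forall>x y :: 'a. x \<le> y \<or> y \<le> x) \<and>
     (\<forall>a b :: 'a. a + b = max a b)"

definition tempered_growth :: "'a::{comm_semiring_1,order} itself \<Rightarrow> bool" where
  "tempered_growth _ \<longleftrightarrow>
     (\<forall>(P :: nat poly) (x :: 'a). P \<noteq> 0 \<longrightarrow>
        (\<forall>n. x ^ n \<le> of_nat (poly P n)) \<longrightarrow> x \<le> 1)"

end

theory Submission
  imports Defs
begin

text \<open>In a tropical halo addition is idempotent, so every natural number is \<open>0\<close> or \<open>1\<close>
  and in particular \<open>\<le> 1\<close>. Hence the hypothesis at \<open>n = 1\<close> alone already gives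
  \<open>x = x ^ 1 \<le> P(1) \<le> 1\<close>.\<close>

lemma zero_le_one_if_add_max:
  assumes add_max: "\<And>a b :: 'a::{semiring_1,order}. a + b = max a b"
    and one_ne_zero: "(1::'a) \<noteq> 0"
  shows "(0::'a) \<le> 1"
proof (rule ccontr)
  assume "\<not> (0::'a) \<le> 1"
  then have "(0::'a) + 1 = 0" using add_max[of 0 1] by (simp add: max_def)
  with one_ne_zero show False by simp
qed

lemma of_nat_le_one_if_add_max:
  assumes add_max: "\<And>a b :: 'a::{semiring_1,order}. a + b = max a b"
    and one_ne_zero: "(1::'a) \<noteq> 0"
  shows "of_nat k \<le> (1::'a)"
proof (induction k)
  case 0
  show ?case using zero_le_one_if_add_max[OF add_max one_ne_zero] by simp
next
  case (Suc k)
  have "of_nat (Suc k) = max (1::'a) (of_nat k)" using add_max[of 1 "of_nat k"] by simp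
  with Suc show ?case by (simp add: max_def)
qed

lemma one_ne_zero_if_nontrivial:
  assumes "(UNIV :: 'a::semiring_1 set) \<noteq> {0}"
  shows "(1::'a) \<noteq> 0"
proof
  assume "(1::'a) = 0"
  then have "y = 0" for y :: 'a by (metis mult_1 mult_zero_left)
  with assms show False by auto
qed

theorem lemma1p28:
  assumes "tropical_halo TYPE('a::{comm_semiring_1,order})"
  shows "tempered_growth TYPE('a)"
  unfolding tempered_growth_def
proof (intro allI impI)
  fix P :: "nat poly" and x :: 'a
  assume "\<forall>n. x ^ n \<le> of_nat (poly P n)"
  then have "x \<le> of_nat (poly P 1)" by (metis power_one_right)
  moreover have "of_nat (poly P 1) \<le> (1::'a)"
    using assms one_ne_zero_if_nontrivial of_nat_le_one_if_add_max
    unfolding tropical_halo_def by blast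
  ultimately show "x \<le> 1" by (rule order_trans)
qed

end
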